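(* Let $n,m,\ell$ be positive integers. Then $$\sum_{j=0}^{n-m-1}\binom{m-\ell+2j}{j}\,\mathcal Y_n\big(2^{\{\ell-j\}},1^{\{m-\ell+2j\}}\big)=\frac{1}{(m+1)(\ell+1)}\binom{n-1}{m}\binom{n-1}{\ell}.$$
   Context: Let $\zeta_n=e^{2\pi\sqrt{-1}/n}$. For positive integers $s_1,\dots,s_m$, define $\mathfrak Z_n(s_1,\dots,s_m):=\sum_{1\le i_1<\cdots<i_m\le n-1}\prod_{k=1}^{m}(1-\zeta_n^{i_k})^{-s_k}$ (equal to $0$ if $m>n-1$). Define $\mathcal Y_n(s_1,\dots,s_m):=\sum_{\sigma}\mathfrak Z_n(\sigma)$, where $\sigma$ runs over all distinct rearrangements of $(s_1,\dots,s_m)$. Notation: $a^{\{k\}}$ denotes the block $a,\dots,a$ of length $k$; any $\mathcal Y_n$ term in which some block has negative length is interpreted as $0$, and a sum whose upper limit is below its lower limit is $0$. Binomial coefficients $\binom{a}{b}$ are $0$ when $b<0$ or $b>a\ge0$. *)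

theory Defs
  imports Complex_Main "HOL-Library.Multiset"
begin

definition zeta :: "nat \<Rightarrow> complex" where
  "zeta n = exp (2 * of_real pi * \<i> / of_nat n)"

text \<open>Multiple sum: sum over 1 \<le> i_1 < ... < i_m \<le> n-1, encoded as m-element subsets
  of {1..n-1} listed increasingly.\<close>
definition Zfrak :: "nat \<Rightarrow> nat list \<Rightarrow> complex" where
  "Zfrak n s = (\<Sum>S \<in> {S. S \<subseteq> {1..n-1} \<and> card S = length s}.
      \<Prod>k<length s. inverse ((1 - zeta n ^ (sorted_list_of_set S ! k)) ^ (s ! k)))"

definition Ysum :: "nat \<Rightarrow> nat list \<Rightarrow> complex" where
  "Ysum n s = (\<Sum>t \<in> {t. mset t = mset s}. Zfrak n t)"

end

theory Submission
  imports Defs "HOL-Computational_Algebra.Fundamental_Theorem_Algebra"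
begin

text \<open>Put f i = 1 / (1 - zeta^i) for i = 1, ..., n-1. Then Y_n(2^a, 1^b) is the monomial symmetric
  function m_(2^a 1^b) of the f i, and the generating function
  prod_i (1 + t f i) = ((1 + t)^n - 1) / (n t) shows that the elementary symmetric functions are
  e_k = C(n-1, k) / (k+1). Expanding e_m e_l over pairs (M, L) of index sets and grouping them by
  S = M \<union> L and A = M \<inter> L gives e_m e_l = sum_a C(m+l-2a, l-a) m_(2^a 1^(m+l-2a)), which is
  the left-hand side after the substitution a = l - j.\<close>

section \<open>Elementary and monomial symmetric sums\<close>

definition elem_sym :: "('a \<Rightarrow> 'b::comm_semiring_1) \<Rightarrow> 'a set \<Rightarrow> nat \<Rightarrow> 'b" where
  "elem_sym g I k = (\<Sum>S | S \<subseteq> I \<and> card S = k. prod g S)"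

lemma elem_sym_eq_0:
  assumes "finite I" "card I < k"
  shows "elem_sym g I k = 0"
proof -
  have "{S. S \<subseteq> I \<and> card S = k} = {}"
    using assms by (auto dest: card_mono[OF assms(1)])
  then show ?thesis
    unfolding elem_sym_def by (simp only: sum.empty)
qed

lemma prod_one_plus_eq_elem_sym:
  assumes "finite I"
  shows "(\<Prod>i\<in>I. 1 + t * g i) = (\<Sum>k\<le>card I. elem_sym g I k * t ^ k)"
proof -
  have "(\<Prod>i\<in>I. t * g i + 1) = (\<Sum>S\<in>Pow I. (\<Prod>i\<in>S. t * g i) * (\<Prod>i\<in>I-S. 1))"
    by (rule prod_add[OF assms])
  also have "\<dots> = (\<Sum>S\<in>Pow I. prod g S * t ^ card S)"
    by (simp add: prod.distrib mult_ac)
  also have "\<dots> = (\<Sum>k\<le>card I. \<Sum>S | S \<in> Pow I \<and> card S = k. prod g S * t ^ card S)"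
    by (rule sum.group[symmetric]) (use assms in \<open>auto intro: card_mono\<close>)
  also have "\<dots> = (\<Sum>k\<le>card I. elem_sym g I k * t ^ k)"
    by (simp add: elem_sym_def sum_distrib_right)
  finally show ?thesis
    by (simp add: add.commute)
qed

definition monomial_sym_2_1 :: "('a \<Rightarrow> 'b::comm_semiring_1) \<Rightarrow> 'a set \<Rightarrow> nat \<Rightarrow> nat \<Rightarrow> 'b" where
  "monomial_sym_2_1 g I a b =
     (\<Sum>S | S \<subseteq> I \<and> card S = a + b. \<Sum>A | A \<subseteq> S \<and> card A = a. prod g S * prod g A)"

lemma monomial_sym_2_1_eq_0:
  assumes "finite I" "card I < a + b"
  shows "monomial_sym_2_1 g I a b = 0"
proof -
  have "{S. S \<subseteq> I \<and> card S = a + b} = {}"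
    using assms by (auto dest: card_mono[OF assms(1)])
  then show ?thesis
    unfolding monomial_sym_2_1_def by (simp only: sum.empty)
qed

lemma card_pairs_with_union_inter:
  assumes "finite S" "A \<subseteq> S" "S \<subseteq> I" "card A \<le> m" "card A \<le> l" "card S + card A = m + l"
  shows "card {(M, L). M \<subseteq> I \<and> card M = m \<and> L \<subseteq> I \<and> card L = l \<and> M \<union> L = S \<and> M \<inter> L = A}
           = (card S - card A) choose (l - card A)"
proof -
  let ?pairs = "{(M, L). M \<subseteq> I \<and> card M = m \<and> L \<subseteq> I \<and> card L = l \<and> M \<union> L = S \<and> M \<inter> L = A}"
  let ?D = "{D. D \<subseteq> S - A \<and> card D = l - card A}"
  have "finite A"
    using assms(1,2) finite_subset by blast
  have "bij_betw (\<lambda>(M, L). L - A) ?pairs ?D"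
  proof (rule bij_betw_byWitness[where f' = "\<lambda>D. (S - D, A \<union> D)"])
    show "(\<lambda>(M, L). L - A) ` ?pairs \<subseteq> ?D"
    proof (rule image_subsetI)
      fix p assume "p \<in> ?pairs"
      then obtain M L where p: "p = (M, L)" "card L = l" "S = M \<union> L" "A = M \<inter> L"
        by auto
      moreover have "finite L"
        using \<open>finite S\<close> \<open>S = M \<union> L\<close> by simp
      ultimately show "(\<lambda>(M, L). L - A) p \<in> ?D"
        by (auto simp: card_Diff_subset Int_lower2)
    qed
    show "(\<lambda>D. (S - D, A \<union> D)) ` ?D \<subseteq> ?pairs"
    proof (rule image_subsetI)
      fix D assume "D \<in> ?D"
      then have D: "D \<subseteq> S - A" "card D = l - card A"
        by auto
      have "finite D"
        using \<open>finite S\<close> D(1) finite_subset by blast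
      have "card (S - D) = m"
        using D assms \<open>finite D\<close> by (subst card_Diff_subset) auto
      moreover have "card (A \<union> D) = l"
        using D assms \<open>finite A\<close> \<open>finite D\<close> by (subst card_Un_disjoint) auto
      ultimately show "(S - D, A \<union> D) \<in> ?pairs"
        using D assms by auto
    qed
  qed auto
  then have "card ?pairs = card ?D"
    by (rule bij_betw_same_card)
  also have "\<dots> = (card S - card A) choose (l - card A)"
    using assms \<open>finite A\<close> by (simp add: n_subsets card_Diff_subset)
  finally show ?thesis .
qed

lemma elem_sym_mult_eq_sum_union_inter:
  fixes g :: "'a \<Rightarrow> 'b::comm_semiring_1"
  assumes "finite I"
  shows "elem_sym g I m * elem_sym g I l =
    (\<Sum>(S, A) | S \<subseteq> I \<and> A \<subseteq> S \<and> card A \<le> min m l \<and> card S + card A = m + l.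
       of_nat ((card S - card A) choose (l - card A)) * (prod g S * prod g A))"
proof -
  define P where "P = {M. M \<subseteq> I \<and> card M = m} \<times> {L. L \<subseteq> I \<and> card L = l}"
  define T where "T = {(S, A). S \<subseteq> I \<and> A \<subseteq> S \<and> card A \<le> min m l \<and> card S + card A = m + l}"
  define \<phi> where "\<phi> = (\<lambda>(M, L). (M \<union> L :: 'a set, M \<inter> L))"
  define G where "G = (\<lambda>(S, A). prod g S * prod g A)"
  have "finite P"
    using assms by (auto simp: P_def intro: finite_subset[of _ "Pow I \<times> Pow I"])
  have "finite T"
    using assms by (auto simp: T_def intro: finite_subset[of _ "Pow I \<times> Pow I"])
  have "\<phi> ` P \<subseteq> T"
  proof (rule image_subsetI)
    fix p assume "p \<in> P"
    then obtain M L where p: "p = (M, L)" "M \<subseteq> I" "L \<subseteq> I" "card M = m" "card L = l"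
      by (auto simp: P_def)
    then have "finite M" "finite L"
      using assms finite_subset by blast+
    then show "\<phi> p \<in> T"
      using p card_Un_Int[of M L] card_mono[of M "M \<inter> L"] card_mono[of L "M \<inter> L"]
      by (auto simp: T_def \<phi>_def)
  qed
  have "elem_sym g I m * elem_sym g I l = (\<Sum>(M, L)\<in>P. prod g M * prod g L)"
    by (simp add: elem_sym_def P_def sum_product sum.cartesian_product)
  also have "\<dots> = (\<Sum>p\<in>P. G (\<phi> p))"
    using assms by (intro sum.cong refl)
      (auto simp: P_def G_def \<phi>_def prod.union_inter finite_subset)
  also have "\<dots> = (\<Sum>q\<in>T. of_nat (card {p \<in> P. \<phi> p = q}) * G q)"
    by (rule sum_fun_comp) fact+
  also have "\<dots> = (\<Sum>(S, A)\<in>T. of_nat ((card S - card A) choose (l - card A)) * G (S, A))"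
  proof (intro sum.cong refl, clarify)
    fix S A assume "(S, A) \<in> T"
    moreover have "{p \<in> P. \<phi> p = (S, A)} =
        {(M, L). M \<subseteq> I \<and> card M = m \<and> L \<subseteq> I \<and> card L = l \<and> M \<union> L = S \<and> M \<inter> L = A}"
      by (auto simp: P_def \<phi>_def)
    ultimately show "of_nat (card {p \<in> P. \<phi> p = (S, A)}) * G (S, A) =
        of_nat ((card S - card A) choose (l - card A)) * G (S, A)"
      using assms card_pairs_with_union_inter[of S A I m l] by (auto simp: T_def finite_subset)
  qed
  finally show ?thesis
    by (simp add: T_def G_def)
qed

lemma elem_sym_mult:
  fixes g :: "'a \<Rightarrow> 'b::comm_semiring_1"
  assumes "finite I"
  shows "elem_sym g I m * elem_sym g I l =
    (\<Sum>a\<le>min m l. of_nat ((m + l - 2 * a) choose (l - a)) * monomial_sym_2_1 g I a (m + l - 2 * a))"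
proof -
  define T where "T = {(S, A). S \<subseteq> I \<and> A \<subseteq> S \<and> card A \<le> min m l \<and> card S + card A = m + l}"
  define F where "F = (\<lambda>(S, A). of_nat ((card S - card A) choose (l - card A)) * (prod g S * prod g A))"
  have "finite T"
    using assms by (auto simp: T_def intro: finite_subset[of _ "Pow I \<times> Pow I"])
  have "elem_sym g I m * elem_sym g I l = sum F T"
    unfolding elem_sym_mult_eq_sum_union_inter[OF assms] T_def F_def ..
  also have "\<dots> = (\<Sum>a\<le>min m l. \<Sum>q | q \<in> T \<and> card (snd q) = a. F q)"
    by (rule sum.group[symmetric]) (use \<open>finite T\<close> in \<open>auto simp: T_def\<close>)
  also have "\<dots> = (\<Sum>a\<le>min m l. of_nat ((m + l - 2 * a) choose (l - a)) * monomial_sym_2_1 g I a (m + l - 2 * a))"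
  proof (rule sum.cong[OF refl])
    fix a assume "a \<in> {..min m l}"
    then have T_a: "{q \<in> T. card (snd q) = a} =
        Sigma {S. S \<subseteq> I \<and> card S = a + (m + l - 2 * a)} (\<lambda>S. {A. A \<subseteq> S \<and> card A = a})"
      by (auto simp: T_def)
    have "finite {S. S \<subseteq> I \<and> card S = a + (m + l - 2 * a)}"
      using assms by simp
    moreover have "finite {A. A \<subseteq> S \<and> card A = a}" if "S \<subseteq> I" for S
      using finite_subset[OF that assms] by simp
    ultimately have "sum F {q \<in> T. card (snd q) = a} =
        (\<Sum>S | S \<subseteq> I \<and> card S = a + (m + l - 2 * a). \<Sum>A | A \<subseteq> S \<and> card A = a. F (S, A))"
      unfolding T_a by (simp add: sum.Sigma)
    also have "\<dots> = (\<Sum>S | S \<subseteq> I \<and> card S = a + (m + l - 2 * a). \<Sum>A | A \<subseteq> S \<and> card A = a.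
        of_nat ((m + l - 2 * a) choose (l - a)) * (prod g S * prod g A))"
      by (intro sum.cong refl) (auto simp: F_def)
    finally show "sum F {q \<in> T. card (snd q) = a} =
        of_nat ((m + l - 2 * a) choose (l - a)) * monomial_sym_2_1 g I a (m + l - 2 * a)"
      by (simp add: monomial_sym_2_1_def sum_distrib_left)
  qed
  finally show ?thesis .
qed

section \<open>Rearrangements of two-letter words\<close>

lemma card_positions_eq_count:
  "card {k. k < length t \<and> t ! k = x} = count (mset t) x"
  by (simp add: count_mset count_list_eq_length_filter length_filter_conv_card eq_commute)

lemma mset_map_indicator_upt:
  assumes "K \<subseteq> {..<n}"
  shows "mset (map (\<lambda>k. if k \<in> K then x else y) [0..<n])
           = replicate_mset (card K) x + replicate_mset (n - card K) y"
proof -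
  have "finite K"
    using assms finite_subset by auto
  have "mset [0..<n] = mset_set K + mset_set ({..<n} - K)"
    using assms \<open>finite K\<close> by (subst mset_set_Union[symmetric]) (auto simp: Un_absorb1 atLeast0LessThan)
  then have "mset (map (\<lambda>k. if k \<in> K then x else y) [0..<n])
      = image_mset (\<lambda>k. if k \<in> K then x else y) (mset_set K + mset_set ({..<n} - K))"
    by (simp only: mset_map)
  also have "\<dots> = image_mset (\<lambda>_. x) (mset_set K) + image_mset (\<lambda>_. y) (mset_set ({..<n} - K))"
    unfolding image_mset_union
    by (intro arg_cong2[where f = "(+)"] image_mset_cong) (use \<open>finite K\<close> in auto)
  also have "\<dots> = replicate_mset (card K) x + replicate_mset (n - card K) y"
    using assms \<open>finite K\<close> by (simp add: image_mset_const_eq card_Diff_subset)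
  finally show ?thesis .
qed

lemma bij_betw_subsets_two_valued_lists:
  assumes "x \<noteq> y"
  shows "bij_betw (\<lambda>K. map (\<lambda>k. if k \<in> K then x else y) [0..<a + b])
           {K. K \<subseteq> {..<a + b} \<and> card K = a} {t. mset t = mset (replicate a x @ replicate b y)}"
proof (rule bij_betw_byWitness[where f' = "\<lambda>t. {k. k < a + b \<and> t ! k = x}"])
  show "\<forall>K \<in> {K. K \<subseteq> {..<a + b} \<and> card K = a}.
      {k. k < a + b \<and> map (\<lambda>k. if k \<in> K then x else y) [0..<a + b] ! k = x} = K"
    using assms by (auto split: if_splits)
  show "\<forall>t \<in> {t. mset t = mset (replicate a x @ replicate b y)}.
      map (\<lambda>k. if k \<in> {k. k < a + b \<and> t ! k = x} then x else y) [0..<a + b] = t"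
  proof
    fix t assume "t \<in> {t. mset t = mset (replicate a x @ replicate b y)}"
    then have "length t = a + b" "set t \<subseteq> {x, y}"
      using mset_eq_length mset_eq_setD by fastforce+
    then have "t ! k = x \<or> t ! k = y" if "k < a + b" for k
      using that nth_mem[of k t] by force
    with \<open>length t = a + b\<close>
    show "map (\<lambda>k. if k \<in> {k. k < a + b \<and> t ! k = x} then x else y) [0..<a + b] = t"
      by (intro nth_equalityI) auto
  qed
  show "(\<lambda>K. map (\<lambda>k. if k \<in> K then x else y) [0..<a + b]) ` {K. K \<subseteq> {..<a + b} \<and> card K = a}
      \<subseteq> {t. mset t = mset (replicate a x @ replicate b y)}"
    using mset_map_indicator_upt[of _ "a + b" x y] by auto
  show "(\<lambda>t. {k. k < a + b \<and> t ! k = x}) ` {t. mset t = mset (replicate a x @ replicate b y)}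
      \<subseteq> {K. K \<subseteq> {..<a + b} \<and> card K = a}"
  proof (rule image_subsetI)
    fix t assume "t \<in> {t. mset t = mset (replicate a x @ replicate b y)}"
    then have "mset t = mset (replicate a x @ replicate b y)" "length t = a + b"
      using mset_eq_length by fastforce+
    then show "{k. k < a + b \<and> t ! k = x} \<in> {K. K \<subseteq> {..<a + b} \<and> card K = a}"
      using card_positions_eq_count[of t x] assms by auto
  qed
qed

lemma bij_betw_image_subsets_card:
  assumes "bij_betw f A B"
  shows "bij_betw (image f) {K. K \<subseteq> A \<and> card K = k} {L. L \<subseteq> B \<and> card L = k}"
proof (rule bij_betw_subset[OF bij_betw_image_Pow[OF assms]])
  have card_image_subset: "card (f ` K) = card K" if "K \<subseteq> A" for K
    using assms that by (meson bij_betw_def card_image inj_on_subset)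
  have Pow_image: "image f ` Pow A = Pow B"
    using bij_betw_imp_surj_on[OF bij_betw_image_Pow[OF assms]] .
  show "image f ` {K. K \<subseteq> A \<and> card K = k} = {L. L \<subseteq> B \<and> card L = k}"
  proof
    show "image f ` {K. K \<subseteq> A \<and> card K = k} \<subseteq> {L. L \<subseteq> B \<and> card L = k}"
      using assms card_image_subset by (auto simp: bij_betw_def)
    show "{L. L \<subseteq> B \<and> card L = k} \<subseteq> image f ` {K. K \<subseteq> A \<and> card K = k}"
    proof
      fix L assume L: "L \<in> {L. L \<subseteq> B \<and> card L = k}"
      then have "L \<in> image f ` Pow A"
        using Pow_image by auto
      then obtain K where "K \<subseteq> A" "L = f ` K"
        by auto
      then show "L \<in> image f ` {K. K \<subseteq> A \<and> card K = k}"
        using L card_image_subset by auto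
    qed
  qed
qed auto

lemma sum_position_subsets_prod_squares:
  fixes g :: "'a \<Rightarrow> 'b::comm_semiring_1"
  assumes "distinct xs" "set xs = S"
  shows "(\<Sum>K | K \<subseteq> {..<length xs} \<and> card K = a. \<Prod>k<length xs. g (xs ! k) ^ (if k \<in> K then 2 else 1))
       = (\<Sum>A | A \<subseteq> S \<and> card A = a. prod g S * prod g A)"
proof -
  have bij: "bij_betw ((!) xs) {..<length xs} S"
    using assms by (intro bij_betw_nth) auto
  have "(\<Prod>k<length xs. g (xs ! k) ^ (if k \<in> K then 2 else 1)) = prod g S * prod g ((!) xs ` K)"
    if "K \<subseteq> {..<length xs}" for K
  proof -
    have "(\<Prod>k<length xs. g (xs ! k) ^ (if k \<in> K then 2 else 1))
        = (\<Prod>k<length xs. g (xs ! k) * (if k \<in> K then g (xs ! k) else 1))"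
      by (intro prod.cong) (auto simp: power2_eq_square)
    also have "\<dots> = (\<Prod>k<length xs. g (xs ! k)) * (\<Prod>k\<in>K. g (xs ! k))"
      using prod.inter_restrict[of "{..<length xs}" "\<lambda>k. g (xs ! k)" K] that
      by (simp add: prod.distrib Int_absorb1)
    also have "\<dots> = prod g S * prod g ((!) xs ` K)"
    proof -
      have "inj_on ((!) xs) K"
        using bij that by (meson bij_betw_def inj_on_subset)
      then show ?thesis
        using prod.reindex_bij_betw[OF bij, of g] by (simp add: prod.reindex)
    qed
    finally show ?thesis .
  qed
  then have "(\<Sum>K | K \<subseteq> {..<length xs} \<and> card K = a. \<Prod>k<length xs. g (xs ! k) ^ (if k \<in> K then 2 else 1))
      = (\<Sum>K | K \<subseteq> {..<length xs} \<and> card K = a. prod g S * prod g ((!) xs ` K))"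
    by (intro sum.cong) auto
  also have "\<dots> = (\<Sum>A | A \<subseteq> S \<and> card A = a. prod g S * prod g A)"
    using sum.reindex_bij_betw[OF bij_betw_image_subsets_card[OF bij]] .
  finally show ?thesis .
qed

section \<open>Roots of unity\<close>

lemma zeta_pow_eq_cis: "zeta n ^ k = cis (2 * pi * real k / real n)"
proof -
  have "2 * complex_of_real pi * \<i> / of_nat n = \<i> * complex_of_real (2 * pi / real n)"
    by (simp add: field_simps)
  then have "zeta n = cis (2 * pi / real n)"
    by (simp add: zeta_def cis_conv_exp mult_ac)
  then show ?thesis
    by (simp add: DeMoivre mult_ac)
qed

lemma prod_minus_zeta_pow:
  assumes "n > 0"
  shows "(\<Prod>k<n. w - zeta n ^ k) = w ^ n - 1"
proof -
  define p :: "complex poly" where "p = monom 1 n + [:-1:]"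
  have poly_p: "poly p z = z ^ n - 1" for z
    by (simp add: p_def poly_monom)
  have "degree p = n"
    unfolding p_def using assms by (subst degree_add_eq_left) (auto simp: degree_monom_eq)
  then have "lead_coeff p = 1"
    using assms by (cases n) (simp_all add: p_def)
  moreover have "rsquarefree p"
    unfolding rsquarefree_roots
  proof (intro allI notI)
    fix z assume "poly p z = 0 \<and> poly (pderiv p) z = 0"
    then have "z ^ n = 1" "of_nat n * z ^ (n - 1) = 0"
      by (auto simp: poly_p p_def pderiv_add pderiv_monom pderiv_pCons poly_monom)
    then show False
      using assms by (cases "z = 0") (auto simp: power_0_left)
  qed
  ultimately have "(\<Prod>z | z ^ n = 1. [:-z, 1:]) = p"
    using complex_poly_decompose_rsquarefree[of p] by (simp add: poly_p)
  then have "poly (\<Prod>z | z ^ n = 1. [:-z, 1:]) w = w ^ n - 1"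
    by (simp add: poly_p)
  then have "(\<Prod>z | z ^ n = 1. w - z) = w ^ n - 1"
    by (simp add: poly_prod)
  moreover have "(\<Prod>k<n. w - cis (2 * pi * real k / real n)) = (\<Prod>z | z ^ n = 1. w - z)"
    by (rule prod.reindex_bij_betw[OF bij_betw_roots_unity[OF assms]])
  ultimately show ?thesis
    by (simp add: zeta_pow_eq_cis)
qed

lemma prod_minus_nontrivial_zeta_pow:
  assumes "n > 0"
  shows "(\<Prod>k\<in>{1..n-1}. w - zeta n ^ k) = (\<Sum>k<n. w ^ k)"
proof -
  txt \<open>Cancelling the factor X - 1 in the polynomial ring makes the identity hold at w = 1 as well.\<close>
  define q :: "complex poly" where "q = (\<Prod>k\<in>{1..n-1}. [:-(zeta n ^ k), 1:])"
  define r :: "complex poly" where "r = (\<Sum>k<n. monom 1 k)"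
  have "poly ([:-1, 1:] * q) z = poly ([:-1, 1:] * r) z" for z
  proof -
    have "{..<n} = insert 0 {1..n-1}"
      using assms by auto
    then have "poly ([:-1, 1:] * q) z = (\<Prod>k<n. z - zeta n ^ k)"
      by (simp add: q_def poly_prod algebra_simps)
    also have "\<dots> = (z - 1) * (\<Sum>k<n. z ^ k)"
      using prod_minus_zeta_pow[OF assms] power_diff_1_eq by metis
    also have "\<dots> = poly ([:-1, 1:] * r) z"
      by (simp add: r_def poly_sum poly_monom algebra_simps)
    finally show ?thesis .
  qed
  then have "[:-1, 1:] * q = [:-1, 1:] * r"
    by (simp only: poly_eq_poly_eq_iff[symmetric]) (rule ext)
  then have "q = r"
    by (rule mult_left_cancel[THEN iffD1, rotated]) simp
  then have "poly q w = poly r w"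
    by simp
  then show ?thesis
    by (simp add: q_def r_def poly_prod poly_sum poly_monom)
qed

lemma sum_power_one_plus:
  fixes t :: "'a::comm_semiring_1"
  shows "(\<Sum>k<n. (1 + t) ^ k) = (\<Sum>k<n. of_nat (n choose Suc k) * t ^ k)"
proof (induction n)
  case (Suc n)
  have "(\<Sum>k<Suc n. of_nat (Suc n choose Suc k) * t ^ k)
      = (\<Sum>k<Suc n. of_nat (n choose k) * t ^ k) + (\<Sum>k<n. of_nat (n choose Suc k) * t ^ k)"
    by (simp add: sum.distrib distrib_right binomial_eq_0)
  also have "(\<Sum>k<Suc n. of_nat (n choose k) * t ^ k) = (1 + t) ^ n"
    using binomial_ring[of t 1 n] by (simp add: lessThan_Suc_atMost add.commute mult_ac)
  finally show ?case
    using Suc by (simp add: add.commute)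
qed simp

lemma prod_one_plus_inverse_one_minus_zeta:
  assumes "n > 0"
  shows "(\<Prod>i\<in>{1..n-1}. 1 + t * inverse (1 - zeta n ^ i)) = (\<Sum>k<n. (1 + t) ^ k) / of_nat n"
proof -
  have prod_one_minus: "(\<Prod>i\<in>{1..n-1}. 1 - zeta n ^ i) = of_nat n"
    using prod_minus_nontrivial_zeta_pow[OF assms, of 1] by simp
  then have nonzero: "1 - zeta n ^ i \<noteq> 0" if "i \<in> {1..n-1}" for i
    using that assms prod_zero_iff[of "{1..n-1}" "\<lambda>i. 1 - zeta n ^ i"] by force
  have "(\<Prod>i\<in>{1..n-1}. 1 + t * inverse (1 - zeta n ^ i))
      = (\<Prod>i\<in>{1..n-1}. (1 + t - zeta n ^ i) / (1 - zeta n ^ i))"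
    by (intro prod.cong refl) (use nonzero in \<open>auto simp: field_simps\<close>)
  also have "\<dots> = (\<Sum>k<n. (1 + t) ^ k) / of_nat n"
    by (simp only: prod_dividef prod_one_minus) (simp only: prod_minus_nontrivial_zeta_pow[OF assms])
  finally show ?thesis .
qed

lemma elem_sym_inverse_one_minus_zeta:
  assumes "n > 0"
  shows "elem_sym (\<lambda>i. inverse (1 - zeta n ^ i)) {1..n-1} k = of_nat ((n - 1) choose k) / of_nat (k + 1)"
proof (cases "k \<le> n - 1")
  case True
  define e where "e = elem_sym (\<lambda>i. inverse (1 - zeta n ^ i)) {1..n-1}"
  have "(\<Sum>k\<le>n-1. e k * t ^ k) = (\<Sum>k\<le>n-1. of_nat (n choose Suc k) / of_nat n * t ^ k)" for t
  proof -
    have "(\<Sum>k\<le>n-1. e k * t ^ k) = (\<Prod>i\<in>{1..n-1}. 1 + t * inverse (1 - zeta n ^ i))"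
      using prod_one_plus_eq_elem_sym[of "{1..n-1}" t "\<lambda>i. inverse (1 - zeta n ^ i)"]
      by (simp add: e_def)
    also have "\<dots> = (\<Sum>k\<le>n-1. of_nat (n choose Suc k) / of_nat n * t ^ k)"
      unfolding prod_one_plus_inverse_one_minus_zeta[OF assms]
      using assms by (simp add: sum_power_one_plus sum_divide_distrib lessThan_Suc_atMost[symmetric])
    finally show ?thesis .
  qed
  then have "e k = of_nat (n choose Suc k) / of_nat n"
    using polyfun_eq_coeffs[of e "n - 1" "\<lambda>k. of_nat (n choose Suc k) / of_nat n"] True
    by blast
  also have "\<dots> = of_nat ((n - 1) choose k) / of_nat (k + 1)"
  proof -
    have "of_nat (Suc k * (n choose Suc k)) = (of_nat (n * ((n - 1) choose k)) :: complex)"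
      by (simp only: binomial_absorption)
    moreover have "(1 + of_nat k :: complex) \<noteq> 0"
      by (metis of_nat_Suc of_nat_neq_0 add.commute)
    ultimately show ?thesis
      using assms by (simp add: field_simps)
  qed
  finally show ?thesis
    by (simp add: e_def)
next
  case False
  then show ?thesis
    by (simp add: elem_sym_eq_0 binomial_eq_0)
qed

lemma Ysum_replicate_2_1:
  "Ysum n (replicate a 2 @ replicate b 1) = monomial_sym_2_1 (\<lambda>i. inverse (1 - zeta n ^ i)) {1..n-1} a b"
proof -
  define f where "f = (\<lambda>i. inverse (1 - zeta n ^ i))"
  define \<tau> where "\<tau> = (\<lambda>K. map (\<lambda>k. if k \<in> K then 2 else 1) [0..<a + b] :: nat list)"
  let ?T = "{t. mset t = mset (replicate a (2::nat) @ replicate b 1)}"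
  let ?K = "{K. K \<subseteq> {..<a + b} \<and> card K = a}"
  let ?S = "{S. S \<subseteq> {1..n-1} \<and> card S = a + b}"
  have bij: "bij_betw \<tau> ?K ?T"
    unfolding \<tau>_def by (rule bij_betw_subsets_two_valued_lists) simp
  have "Ysum n (replicate a 2 @ replicate b 1) = (\<Sum>t\<in>?T. \<Sum>S\<in>?S. \<Prod>k<a + b. f (sorted_list_of_set S ! k) ^ (t ! k))"
    unfolding Ysum_def
  proof (intro sum.cong refl)
    fix t assume "t \<in> ?T"
    then have "length t = a + b"
      using mset_eq_length by fastforce
    then show "Zfrak n t = (\<Sum>S\<in>?S. \<Prod>k<a + b. f (sorted_list_of_set S ! k) ^ (t ! k))"
      by (simp add: Zfrak_def f_def power_inverse)
  qed
  also have "\<dots> = (\<Sum>S\<in>?S. \<Sum>t\<in>?T. \<Prod>k<a + b. f (sorted_list_of_set S ! k) ^ (t ! k))"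
    by (rule sum.swap)
  also have "\<dots> = (\<Sum>S\<in>?S. \<Sum>K\<in>?K. \<Prod>k<a + b. f (sorted_list_of_set S ! k) ^ (if k \<in> K then 2 else 1))"
    unfolding sum.reindex_bij_betw[OF bij, symmetric]
    by (intro sum.cong refl prod.cong) (auto simp: \<tau>_def)
  also have "\<dots> = (\<Sum>S\<in>?S. \<Sum>A | A \<subseteq> S \<and> card A = a. prod f S * prod f A)"
  proof (rule sum.cong[OF refl])
    fix S assume "S \<in> ?S"
    then have "finite S" "length (sorted_list_of_set S) = a + b"
      using finite_subset by auto
    then show "(\<Sum>K\<in>?K. \<Prod>k<a + b. f (sorted_list_of_set S ! k) ^ (if k \<in> K then 2 else 1))
        = (\<Sum>A | A \<subseteq> S \<and> card A = a. prod f S * prod f A)"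
      using sum_position_subsets_prod_squares[of "sorted_list_of_set S" S f a] by simp
  qed
  finally show ?thesis
    by (simp add: monomial_sym_2_1_def f_def)
qed

definition Ysum_summand :: "nat \<Rightarrow> nat \<Rightarrow> nat \<Rightarrow> int \<Rightarrow> complex" where
  "Ysum_summand n m l j =
     (if int l - j < 0 \<or> int m - int l + 2 * j < 0 then 0
      else of_nat (nat (int m - int l + 2 * j) choose nat j) *
           Ysum n (replicate (nat (int l - j)) 2 @ replicate (nat (int m - int l + 2 * j)) 1))"

lemma Ysum_summand_eq_monomial_sym:
  assumes "a \<le> min m l"
  shows "Ysum_summand n m l (int l - int a) =
    of_nat ((m + l - 2 * a) choose (l - a)) *
    monomial_sym_2_1 (\<lambda>i. inverse (1 - zeta n ^ i)) {1..n-1} a (m + l - 2 * a)"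
proof -
  have "nat (int m - int l + 2 * (int l - int a)) = m + l - 2 * a" "nat (int l - int a) = l - a"
    "nat (int l - (int l - int a)) = a"
    using assms by auto
  then show ?thesis
    using assms unfolding Ysum_summand_def Ysum_replicate_2_1 by simp
qed

lemma Ysum_summand_eq_0:
  assumes "n > 0" "0 \<le> j" "j < int l - int (min m l) \<or> int l < j \<or> int n - int m \<le> j"
  shows "Ysum_summand n m l j = 0"
proof (cases "int l - j < 0 \<or> int m - int l + 2 * j < 0")
  case False
  then consider "nat (int m - int l + 2 * j) < nat j" | "n - 1 < nat (int l - j) + nat (int m - int l + 2 * j)"
    using assms by linarith
  then show ?thesis
    unfolding Ysum_summand_def Ysum_replicate_2_1
    by cases (simp_all add: binomial_eq_0 monomial_sym_2_1_eq_0)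
qed (simp add: Ysum_summand_def)

theorem theorem5:
  fixes n m l :: nat
  assumes "n > 0" and "m > 0" and "l > 0"
  shows "(\<Sum>j \<in> {0..int n - int m - 1}.
            (if int l - j < 0 \<or> int m - int l + 2 * j < 0 then 0
             else of_nat ((nat (int m - int l + 2 * j)) choose (nat j)) *
                  Ysum n (replicate (nat (int l - j)) 2 @ replicate (nat (int m - int l + 2 * j)) 1)))
         = (1 / (of_nat ((m + 1) * (l + 1)))) * of_nat ((n - 1) choose m) * of_nat ((n - 1) choose l)"
proof -
  define f where "f = (\<lambda>i. inverse (1 - zeta n ^ i))"
  have "(\<Sum>j\<in>{0..int n - int m - 1}. Ysum_summand n m l j)
      = (\<Sum>j\<in>{int l - int (min m l)..int l}. Ysum_summand n m l j)"
    by (rule sum.mono_neutral_cong) (auto intro!: Ysum_summand_eq_0 assms(1))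
  also have "\<dots> = (\<Sum>a\<le>min m l. Ysum_summand n m l (int l - int a))"
    by (rule sum.reindex_bij_witness[where i = "\<lambda>a. int l - int a" and j = "\<lambda>j. nat (int l - j)"]) auto
  also have "\<dots> = (\<Sum>a\<le>min m l. of_nat ((m + l - 2 * a) choose (l - a)) * monomial_sym_2_1 f {1..n-1} a (m + l - 2 * a))"
    by (simp add: Ysum_summand_eq_monomial_sym f_def)
  also have "\<dots> = elem_sym f {1..n-1} m * elem_sym f {1..n-1} l"
    by (simp add: elem_sym_mult)
  also have "\<dots> = (1 / (of_nat ((m + 1) * (l + 1)))) * of_nat ((n - 1) choose m) * of_nat ((n - 1) choose l)"
    unfolding f_def elem_sym_inverse_one_minus_zeta[OF assms(1)] by (simp add: field_simps)
  finally show ?thesis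
    unfolding Ysum_summand_def .
qed

end
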